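(* For every $n\ge 2$, every symmetric pseudo-Boolean function of $n$ variables has a $y$-linear quadratization involving at most $n-2$ auxiliary variables.
   Context: A pseudo-Boolean function is a map $f:\{0,1\}^n\to\mathbb{R}$; it is symmetric if its value depends only on the Hamming weight $\sum_j x_j$. A quadratization of $f$ using $m$ auxiliary variables is a polynomial $g(x,y)$ of degree at most $2$ in $x_1,\ldots,x_n,y_1,\ldots,y_m$ such that $f(x)=\min\{g(x,y):y\in\{0,1\}^m\}$ for all $x\in\{0,1\}^n$. It is $y$-linear if it contains no product of two auxiliary variables, i.e. $g(x,y)=q(x)+\sum_{i=1}^m a_i(x)y_i$ with $q$ quadratic and each $a_i$ affine in $x$. *)

theory Defs
  imports Complex_Main
begin

definition bvecs :: "nat \<Rightarrow> (nat \<Rightarrow> real) set" where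
  "bvecs n = {x. (\<forall>j<n. x j \<in> {0, 1}) \<and> (\<forall>j\<ge>n. x j = 0)}"

text \<open>A pseudo-Boolean function of n variables is f restricted to bvecs n.
  It is symmetric if its value depends only on the Hamming weight.\<close>
definition symmetric_pbf :: "nat \<Rightarrow> ((nat \<Rightarrow> real) \<Rightarrow> real) \<Rightarrow> bool" where
  "symmetric_pbf n f \<longleftrightarrow>
     (\<forall>x\<in>bvecs n. \<forall>x'\<in>bvecs n. (\<Sum>j<n. x j) = (\<Sum>j<n. x' j) \<longrightarrow> f x = f x')"

text \<open>A general y-linear polynomial g(x,y) = q(x) + sum_i a_i(x) y_i, with q quadratic in x
  and each a_i affine in x.\<close>
definition ylin_poly ::
  "nat \<Rightarrow> nat \<Rightarrow> real \<Rightarrow> (nat \<Rightarrow> real) \<Rightarrow> (nat \<Rightarrow> nat \<Rightarrow> real) \<Rightarrow>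
   (nat \<Rightarrow> real) \<Rightarrow> (nat \<Rightarrow> nat \<Rightarrow> real) \<Rightarrow> (nat \<Rightarrow> real) \<Rightarrow> (nat \<Rightarrow> real) \<Rightarrow> real" where
  "ylin_poly n m c l Q \<alpha> \<beta> x y =
     c + (\<Sum>i<n. l i * x i) + (\<Sum>i<n. \<Sum>j<n. Q i j * x i * x j)
     + (\<Sum>k<m. (\<alpha> k + (\<Sum>i<n. \<beta> k i * x i)) * y k)"

definition has_ylinear_quadratization :: "nat \<Rightarrow> nat \<Rightarrow> ((nat \<Rightarrow> real) \<Rightarrow> real) \<Rightarrow> bool" where
  "has_ylinear_quadratization n m f \<longleftrightarrow>
     (\<exists>c l Q \<alpha> \<beta>. \<forall>x\<in>bvecs n.
        f x = Min ((\<lambda>y. ylin_poly n m c l Q \<alpha> \<beta> x y) ` bvecs m))"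

end

theory Submission
  imports Defs "HOL-Library.FuncSet"
begin

(* A symmetric function f of n binary variables is determined by its weight
   profile F w = f(1^w 0^(n-w)), w = 0..n.  Any such profile can be written as
     F w = A + B w + C w^2 - (SUM t = 1..n-1. lam t * max 0 (w - t)),
   since the hinge max 0 (w - t) has second difference (centred at w) equal to 1 at
   w = t and 0 elsewhere; the weights are lam t = 2C - D t, D the second difference of F.  Choosing
   2C = max D makes every lam t nonnegative and one of them zero, so at most n-2 hinges
   remain, and -lam * max 0 (w - t) = min 0 (lam * (t - w)), which is the minimum
   over y in {0,1} of lam * (t - w) * y.  Substituting w = x_1 + ... + x_n gives a y-linear quadratization. *)

section \<open>Hinge functions and second differences\<close>

definition relu :: "real \<Rightarrow> real" where "relu z = max 0 z"

definition second_diff :: "(nat \<Rightarrow> real) \<Rightarrow> nat \<Rightarrow> real" where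
  "second_diff F t = F (t + 1) - 2 * F t + F (t - 1)"

lemma relu_second_diff:
  fixes w t :: nat
  shows "relu (real (w+2) - real t) - 2 * relu (real (w+1) - real t) + relu (real w - real t)
         = (if t = w + 1 then 1 else 0)"
proof -
  consider "t \<le> w" | "t = w + 1" | "t \<ge> w + 2" by linarith
  then show ?thesis
    by cases (auto simp: relu_def)
qed

lemma hinge_sum_second_diff:
  fixes T :: "nat set" and lam :: "nat \<Rightarrow> real"
  assumes "finite T"
  defines "H \<equiv> \<lambda>w. \<Sum>t\<in>T. lam t * relu (real w - real t)"
  shows "H (w+2) - 2 * H (w+1) + H w = (if w + 1 \<in> T then lam (w+1) else 0)"
proof -
  have "H (w+2) - 2 * H (w+1) + H w
      = (\<Sum>t\<in>T. lam t * (relu (real (w+2) - real t) - 2 * relu (real (w+1) - real t)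
                           + relu (real w - real t)))"
    unfolding H_def by (simp add: sum_subtractf sum.distrib sum_distrib_left algebra_simps)
  also have "\<dots> = (\<Sum>t\<in>T. if t = w + 1 then lam t else 0)"
    by (simp only: relu_second_diff) (simp add: if_distrib cong: if_cong)
  also have "\<dots> = (if w + 1 \<in> T then lam (w+1) else 0)"
    using assms(1) by simp
  finally show ?thesis .
qed

lemma eq_by_second_diff:
  fixes F G :: "nat \<Rightarrow> real"
  assumes "F 0 = G 0" and "F 1 = G 1"
    and "\<And>w. w + 2 \<le> n \<Longrightarrow> F (w+2) - 2 * F (w+1) + F w = G (w+2) - 2 * G (w+1) + G w"
    and "w \<le> n"
  shows "F w = G w"
  using assms(4)
proof (induction w rule: less_induct)
  case (less w)
  show ?case
  proof (cases "w \<le> 1")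
    case True
    then have "w = 0 \<or> w = 1" by auto
    then show ?thesis using assms(1,2) by blast
  next
    case False
    define v where "v = w - 2"
    have w: "w = v + 2" using False by (simp add: v_def)
    have "F v = G v" "F (v+1) = G (v+1)" using less w by auto
    then show ?thesis using assms(3)[of v] less.prems w by simp
  qed
qed

lemma quadratic_hinge_interpolation:
  fixes F :: "nat \<Rightarrow> real" and C :: real
  assumes "w \<le> n"
  shows "F w = F 0 + (F 1 - F 0 - C) * real w + C * (real w)^2
               - (\<Sum>t\<in>{1..n-1}. (2 * C - second_diff F t) * relu (real w - real t))"
proof -
  define H where "H w = (\<Sum>t\<in>{1..n-1}. (2 * C - second_diff F t) * relu (real w - real t))"
    for w
  define G where "G w = F 0 + (F 1 - F 0 - C) * real w + C * (real w)^2 - H w" for w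
  have H_start: "H w = 0" if "w \<le> 1" for w
    unfolding H_def using that by (intro sum.neutral) (auto simp: relu_def)
  have "F w = G w"
  proof (rule eq_by_second_diff[where n = n])
    show "F 0 = G 0" "F 1 = G 1" using H_start[of 0] H_start[of 1] by (simp_all add: G_def)
  next
    fix v assume "v + 2 \<le> n"
    then have "H (v+2) - 2 * H (v+1) + H v = 2 * C - second_diff F (v+1)"
      unfolding H_def by (subst hinge_sum_second_diff) auto
    then show "F (v+2) - 2 * F (v+1) + F v = G (v+2) - 2 * G (v+1) + G v"
      unfolding G_def second_diff_def by (simp add: algebra_simps power2_eq_square)
  qed (fact assms)
  then show ?thesis by (simp add: G_def H_def)
qed

lemma neg_hinge_as_min:
  fixes lam t w :: real
  assumes "lam \<ge> 0"
  shows "- (lam * relu (w - t)) = min 0 (lam * t + (- lam) * w)"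
proof -
  have "lam * t + (- lam) * w = - (lam * (w - t))" by (simp add: algebra_simps)
  moreover have "lam * (w - t) \<ge> 0 \<longleftrightarrow> w - t \<ge> 0 \<or> lam = 0"
    using assms by (auto simp: zero_le_mult_iff)
  ultimately show ?thesis using assms by (auto simp: relu_def)
qed

lemma hinge_sum_as_mins:
  fixes S :: "nat set" and lam :: "nat \<Rightarrow> real"
  assumes "finite S" and "p \<in> S" and "lam p = 0" and "\<And>t. t \<in> S \<Longrightarrow> lam t \<ge> 0"
  shows "\<exists>\<alpha> \<beta>. \<forall>w. - (\<Sum>t\<in>S. lam t * relu (real w - real t))
                    = (\<Sum>k<card S - 1. min 0 (\<alpha> k + \<beta> k * real w))"
proof -
  obtain g where g: "bij_betw g {..<card S - 1} (S - {p})"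
    using ex_bij_betw_nat_finite[of "S - {p}"] assms(1,2) by (auto simp: atLeast0LessThan)
  define \<alpha> where "\<alpha> k = lam (g k) * real (g k)" for k
  define \<beta> where "\<beta> k = - lam (g k)" for k
  have "- (\<Sum>t\<in>S. lam t * relu (real w - real t))
      = (\<Sum>k<card S - 1. min 0 (\<alpha> k + \<beta> k * real w))" for w
  proof -
    have "(\<Sum>t\<in>S. lam t * relu (real w - real t)) = (\<Sum>t\<in>S - {p}. lam t * relu (real w - real t))"
      using assms(1-3) by (simp add: sum_diff1)
    also have "\<dots> = (\<Sum>k<card S - 1. lam (g k) * relu (real w - real (g k)))"
      using sum.reindex_bij_betw[OF g, of "\<lambda>t. lam t * relu (real w - real t)"] by simp
    finally have "- (\<Sum>t\<in>S. lam t * relu (real w - real t))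
        = (\<Sum>k<card S - 1. - (lam (g k) * relu (real w - real (g k))))" by (simp add: sum_negf)
    also have "\<dots> = (\<Sum>k<card S - 1. min 0 (\<alpha> k + \<beta> k * real w))"
    proof (rule sum.cong)
      fix k assume "k \<in> {..<card S - 1}"
      then have "g k \<in> S" using bij_betwE[OF g] by blast
      then show "- (lam (g k) * relu (real w - real (g k))) = min 0 (\<alpha> k + \<beta> k * real w)"
        unfolding \<alpha>_def \<beta>_def by (rule neg_hinge_as_min[OF assms(4)])
    qed simp
    finally show ?thesis .
  qed
  then show ?thesis by blast
qed

text \<open>Choosing 2C = max D makes all hinge weights
  2C - D t nonnegative and the weight at a maximiser p of D zero.\<close>
lemma profile_representation:
  fixes F :: "nat \<Rightarrow> real" and n :: nat
  assumes "n \<ge> 2"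
  shows "\<exists>A B C \<alpha> \<beta>. \<forall>w\<le>n. F w = A + B * real w + C * (real w)^2
            + (\<Sum>k<n-2. min 0 (\<alpha> k + \<beta> k * real w))"
proof -
  define S where "S = {1..n-1}"
  define D where "D = second_diff F"
  have S: "finite S" "S \<noteq> {}" "card S - 1 = n - 2" using assms by (auto simp: S_def)
  obtain p where p: "p \<in> S" "D p = Max (D ` S)"
    using Max_in[of "D ` S"] S(1,2) by (metis (no_types, lifting) finite_imageI image_iff image_is_empty)
  define C where "C = D p / 2"
  define lam where "lam t = 2 * C - D t" for t
  have "lam t \<ge> 0" if "t \<in> S" for t
    using Max_ge[of "D ` S" "D t"] S(1) that p(2) by (simp add: lam_def C_def)
  moreover have "lam p = 0" by (simp add: lam_def C_def)
  ultimately obtain \<alpha> \<beta> where hinges: "\<And>w. - (\<Sum>t\<in>S. lam t * relu (real w - real t))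
                    = (\<Sum>k<n-2. min 0 (\<alpha> k + \<beta> k * real w))"
    using hinge_sum_as_mins[OF S(1) p(1)] unfolding S(3) by blast
  have "F w = F 0 + (F 1 - F 0 - C) * real w + C * (real w)^2
            + (\<Sum>k<n-2. min 0 (\<alpha> k + \<beta> k * real w))" if "w \<le> n" for w
  proof -
    have "F w = F 0 + (F 1 - F 0 - C) * real w + C * (real w)^2
               - (\<Sum>t\<in>S. lam t * relu (real w - real t))"
      unfolding S_def lam_def D_def by (rule quadratic_hinge_interpolation[OF that])
    then show ?thesis using hinges[of w] by linarith
  qed
  then show ?thesis by blast
qed

section \<open>From a weight profile to a y-linear quadratization\<close>

lemma finite_bvecs: "finite (bvecs m)"
proof -
  let ?ext = "\<lambda>g j. if j < m then g j else 0"
  have "bvecs m \<subseteq> ?ext ` PiE {..<m} (\<lambda>_. {0, 1::real})"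
  proof
    fix y assume y: "y \<in> bvecs m"
    then have "y = ?ext (restrict y {..<m})" by (auto simp: bvecs_def fun_eq_iff)
    moreover have "restrict y {..<m} \<in> PiE {..<m} (\<lambda>_. {0, 1::real})"
      using y by (auto simp: bvecs_def)
    ultimately show "y \<in> ?ext ` PiE {..<m} (\<lambda>_. {0, 1::real})" by blast
  qed
  then show ?thesis by (rule finite_subset) (intro finite_imageI finite_PiE, auto)
qed

text \<open>Minimising an affine function over binary vectors is done coordinatewise: each
  auxiliary variable contributes min 0 of its coefficient.\<close>
lemma min_affine_over_bvecs:
  fixes a :: "nat \<Rightarrow> real"
  shows "Min ((\<lambda>y. c + (\<Sum>k<m. a k * y k)) ` bvecs m) = c + (\<Sum>k<m. min 0 (a k))"
proof (rule Min_eqI)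
  show "finite ((\<lambda>y. c + (\<Sum>k<m. a k * y k)) ` bvecs m)" using finite_bvecs by simp
next
  fix v assume "v \<in> (\<lambda>y. c + (\<Sum>k<m. a k * y k)) ` bvecs m"
  then obtain y where y: "y \<in> bvecs m" "v = c + (\<Sum>k<m. a k * y k)" by auto
  have "min 0 (a k) \<le> a k * y k" if "k < m" for k
    using y(1) that by (auto simp: bvecs_def)
  then have "(\<Sum>k<m. min 0 (a k)) \<le> (\<Sum>k<m. a k * y k)" by (intro sum_mono) auto
  then show "c + (\<Sum>k<m. min 0 (a k)) \<le> v" using y(2) by simp
next
  define y where "y k = (if k < m \<and> a k < 0 then 1 else 0 :: real)" for k
  have "y \<in> bvecs m" by (auto simp: bvecs_def y_def)
  moreover have "(\<Sum>k<m. a k * y k) = (\<Sum>k<m. min 0 (a k))"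
    by (rule sum.cong) (auto simp: y_def)
  ultimately show "c + (\<Sum>k<m. min 0 (a k)) \<in> (\<lambda>y. c + (\<Sum>k<m. a k * y k)) ` bvecs m"
    by (metis (no_types, lifting) image_eqI)
qed

text \<open>A function of the weight s = x_1 + ... + x_n of the shape quadratic plus m terms
  min 0 (affine) has a y-linear quadratization with m auxiliary variables: the
  quadratization is A + B s + C s^2 + SUM k<m. (alpha k + beta k s) y_k.\<close>
lemma quadratization_of_weight_profile:
  fixes f :: "(nat \<Rightarrow> real) \<Rightarrow> real"
  assumes "\<And>x. x \<in> bvecs n \<Longrightarrow> f x = A + B * (\<Sum>j<n. x j) + C * (\<Sum>j<n. x j)^2
              + (\<Sum>k<m. min 0 (\<alpha> k + \<beta> k * (\<Sum>j<n. x j)))"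
  shows "has_ylinear_quadratization n m f"
  unfolding has_ylinear_quadratization_def
proof (intro exI ballI)
  fix x assume x: "x \<in> bvecs n"
  define s where "s = (\<Sum>j<n. x j)"
  have quad: "(\<Sum>i<n. \<Sum>j<n. C * x i * x j) = C * s^2"
  proof -
    have "C * s^2 = C * ((\<Sum>i<n. x i) * (\<Sum>j<n. x j))" unfolding s_def power2_eq_square ..
    also have "\<dots> = (\<Sum>i<n. \<Sum>j<n. C * (x i * x j))"
      by (subst sum_product) (simp add: sum_distrib_left)
    finally show ?thesis by (simp add: mult.assoc)
  qed
  have "(\<lambda>y. ylin_poly n m A (\<lambda>_. B) (\<lambda>_ _. C) \<alpha> (\<lambda>k _. \<beta> k) x y)
      = (\<lambda>y. (A + B * s + C * s^2) + (\<Sum>k<m. (\<alpha> k + \<beta> k * s) * y k))"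
    unfolding ylin_poly_def quad by (simp add: s_def sum_distrib_left)
  then show "f x = Min ((\<lambda>y. ylin_poly n m A (\<lambda>_. B) (\<lambda>_ _. C) \<alpha> (\<lambda>k _. \<beta> k) x y) ` bvecs m)"
    using assms[OF x] by (simp add: min_affine_over_bvecs s_def)
qed

section \<open>Symmetric functions and their weight profile\<close>

definition prefix_vec :: "nat \<Rightarrow> nat \<Rightarrow> real" where
  "prefix_vec w j = (if j < w then 1 else 0)"

lemma prefix_vec_bvecs: "w \<le> n \<Longrightarrow> prefix_vec w \<in> bvecs n"
  by (auto simp: bvecs_def prefix_vec_def)

lemma prefix_vec_weight:
  assumes "w \<le> n"
  shows "(\<Sum>j<n. prefix_vec w j) = real w"
proof -
  have "(\<Sum>j<n. prefix_vec w j) = card ({..<n} \<inter> {j. j < w})"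
    by (simp add: prefix_vec_def sum.If_cases)
  also have "{..<n} \<inter> {j. j < w} = {..<w}" using assms by auto
  finally show ?thesis by simp
qed

lemma bvecs_weight:
  assumes "x \<in> bvecs n"
  obtains w where "w \<le> n" and "(\<Sum>j<n. x j) = real w"
proof
  let ?W = "{..<n} \<inter> {j. x j = 1}"
  have "(\<Sum>j<n. x j) = (\<Sum>j<n. if x j = 1 then 1 else 0)"
    using assms by (intro sum.cong) (auto simp: bvecs_def)
  then show "(\<Sum>j<n. x j) = real (card ?W)" by (simp add: sum.If_cases)
  show "card ?W \<le> n" using card_mono[of "{..<n}" ?W] by auto
qed

lemma symmetric_pbf_profile:
  assumes "symmetric_pbf n f" and "x \<in> bvecs n"
  obtains w where "w \<le> n" and "(\<Sum>j<n. x j) = real w" and "f x = f (prefix_vec w)"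
proof -
  obtain w where w: "w \<le> n" "(\<Sum>j<n. x j) = real w" using bvecs_weight[OF assms(2)] .
  then have "f x = f (prefix_vec w)"
    using assms prefix_vec_bvecs[OF w(1)] prefix_vec_weight[OF w(1)]
    unfolding symmetric_pbf_def by metis
  then show thesis using that w by blast
qed

theorem theorem4:
  fixes n :: nat and f :: "(nat \<Rightarrow> real) \<Rightarrow> real"
  assumes "n \<ge> 2" and "symmetric_pbf n f"
  shows "\<exists>m \<le> n - 2. has_ylinear_quadratization n m f"
proof -
  obtain A B C \<alpha> \<beta> where profile: "\<forall>w\<le>n. f (prefix_vec w) = A + B * real w + C * (real w)^2
            + (\<Sum>k<n-2. min 0 (\<alpha> k + \<beta> k * real w))"
    using profile_representation[OF assms(1), of "\<lambda>w. f (prefix_vec w)"] by blast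
  have "has_ylinear_quadratization n (n-2) f"
  proof (rule quadratization_of_weight_profile)
    fix x assume "x \<in> bvecs n"
    then obtain w where "w \<le> n" "(\<Sum>j<n. x j) = real w" "f x = f (prefix_vec w)"
      using symmetric_pbf_profile[OF assms(2)] by blast
    then show "f x = A + B * (\<Sum>j<n. x j) + C * (\<Sum>j<n. x j)^2
              + (\<Sum>k<n-2. min 0 (\<alpha> k + \<beta> k * (\<Sum>j<n. x j)))"
      using profile by simp
  qed
  then show ?thesis by blast
qed

end
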